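(* Let $\mathbb{X}$ be a Cartesian closed $k$-differential category and $C$ an object of $\mathbb{X}$. Then the reader monad $\mathbb{R}(C)=([C,-],\mu^C,\eta^C)$ is a Cartesian $k$-differential monad on $\mathbb{X}$, where $[C,-](A)=[C,A]$, $[C,f]=\lambda(f\circ\mathrm{ev}_{C,A})$ for $f:A\to B$, $\eta^C_A=\lambda(\pi_2):A\to[C,A]$ (with $\pi_2:C\times A\to A$), and $\mu^C_A=\lambda(\mathrm{ev}_{C,A}\circ\langle\pi_1,\mathrm{ev}_{C,[C,A]}\rangle):[C,[C,A]]\to[C,A]$. (In term notation: $[C,f](g)=\lambda x.f(g(x))$, $\mu^C_A(F)=\lambda x.F(x)(x)$, $\eta^C_A(a)=\lambda x.a$.)
   Context: Fix a commutative semiring $k$. A left $k$-linear category is a category $\mathbb{X}$ in which each hom-set $\mathbb{X}(A,B)$ is a $k$-module (scalar multiplication $r\cdot f$, addition $+$, zero $0$) such that precomposition is $k$-linear: $(r\cdot f+s\cdot g)\circ x=r\cdot(f\circ x)+s\cdot(g\circ x)$. A map $f$ is $k$-linear if $f\circ(r\cdot x+s\cdot y)=r\cdot(f\circ x)+s\cdot(f\circ y)$ for all suitable $x,y$ and $r,s\in k$. A Cartesian left $k$-linear category is a left $k$-linear category with finite products (terminal object $\ast$, projections $\pi_j:A_1\times\cdots\times A_n\to A_j$, pairing $\langle-,\dots,-\rangle$) in which all projections are $k$-linear. A Cartesian $k$-differential category is a Cartesian left $k$-linear category equipped with a differential combinator $\mathsf{D}$ assigning to each $f:A\to B$ a map $\mathsf{D}[f]:A\times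 A\to B$ such that: [CD.1] $\mathsf{D}[r\cdot f+s\cdot g]=r\cdot\mathsf{D}[f]+s\cdot\mathsf{D}[g]$; [CD.2] $\mathsf{D}[f]\circ\langle\pi_1,r\cdot\pi_2+s\cdot\pi_3\rangle=r\cdot(\mathsf{D}[f]\circ\langle\pi_1,\pi_2\rangle)+s\cdot(\mathsf{D}[f]\circ\langle\pi_1,\pi_3\rangle)$ (as maps $A\times A\times A\to B$); [CD.3] $\mathsf{D}[1_A]=\pi_2$ and, for $\pi_j:A_1\times\cdots\times A_n\to A_j$, $\mathsf{D}[\pi_j]=\pi_{n+j}$; [CD.4] $\mathsf{D}[\langle f_1,\dots,f_n\rangle]=\langle\mathsf{D}[f_1],\dots,\mathsf{D}[f_n]\rangle$; [CD.5] $\mathsf{D}[g\circ f]=\mathsf{D}[g]\circ\langle f\circ\pi_1,\mathsf{D}[f]\rangle$; [CD.6] $\mathsf{D}[\mathsf{D}[f]]\circ\langle\pi_1,0,0,\pi_2\rangle=\mathsf{D}[f]$; [CD.7] $\mathsf{D}[\mathsf{D}[f]]\circ\langle\pi_1,\pi_2,\pi_3,\pi_4\rangle=\mathsf{D}[\mathsf{D}[f]]\circ\langle\pi_1,\pi_3,\pi_2,\pi_4\rangle$ (identifying $(A\times A)\times(A\times A)$ with $A\times A\times A\times A$). A map $f$ is $\mathsf{D}$-linear if $\mathsf{D}[f]=f\circ\pi_2$. For Cartesian left $k$-linear categories $\mathbb{X},\mathbb{Y}$, a strong Cartesian $k$-linear functor is a functor $\mathsf{F}:\mathbb{X}\to\mathbb{Y}$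 such that $\mathsf{F}(\ast)\to\ast$ is an isomorphism, the canonical maps $\omega_{A_1,\dots,A_n}=\langle\mathsf{F}(\pi_1),\dots,\mathsf{F}(\pi_n)\rangle:\mathsf{F}(A_1\times\cdots\times A_n)\to\mathsf{F}(A_1)\times\cdots\times\mathsf{F}(A_n)$ are isomorphisms, and $\mathsf{F}(r\cdot f+s\cdot g)=r\cdot\mathsf{F}(f)+s\cdot\mathsf{F}(g)$. For Cartesian $k$-differential categories, a strong Cartesian $k$-differential functor is a strong Cartesian $k$-linear functor with $\mathsf{D}[\mathsf{F}(f)]=\mathsf{F}(\mathsf{D}[f])\circ\omega^{-1}_{A,A}$ for all $f:A\to B$. A Cartesian $k$-differential monad on a Cartesian $k$-differential category $\mathbb{X}$ is a monad $\mathbb{S}=(\mathsf{S},\mu,\eta)$ on $\mathbb{X}$ such that $\mathsf{S}$ is a strong Cartesian $k$-differential functor and every $\eta_A$ and $\mu_A$ is $\mathsf{D}$-linear. A Cartesian closed $k$-differential category is a Cartesian $k$-differential category $\mathbb{X}$ which is Cartesian closed, with internal hom $[C,B]$, evaluation $\mathrm{ev}_{C,B}:C\times[C,B]\to B$ and currying bijection $\lambda:\mathbb{X}(C\times A,B)\to\mathbb{X}(A,[C,B])$, such that currying is compatible with the $k$-linear structure ($\lambda(r\cdot f+s\cdot g)=r\cdot\lambda(f)+s\cdot\lambda(g)$) and with the differential combinator: for $f:C\times A\to B$, $\mathsf{D}[\lambda(f)]=\lambda\big(\mathsf{D}[f]\circ\langle\langle\pi_1,\pi_2\rangle,\langle 0,\pi_3\rangle\rangle\big)$,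 where the right-hand side curries the map $C\times A\times A\to B$, $(c,a,b)\mapsto\mathsf{D}[f]((c,a),(0,b))$ (the partial derivative of $f$ in its second argument). In term notation: $\frac{\mathsf{d}\,\lambda y.f(y,x)}{\mathsf{d}x}(a)\cdot b=\lambda y.\frac{\mathsf{d}f(y,x)}{\mathsf{d}x}(a)\cdot b$. *)

theory Defs
  imports Main
begin

text \<open>A category whose objects are the elements of type 'o and whose arrows are
the elements of type 'm, with domain dm, codomain cd, composition cmp g f
(meaning g after f) and identities idm.\<close>

locale category =
  fixes dm :: "'m \<Rightarrow> 'o" and cd :: "'m \<Rightarrow> 'o"
    and cmp :: "'m \<Rightarrow> 'm \<Rightarrow> 'm" and idm :: "'o \<Rightarrow> 'm"
  assumes id_dm: "dm (idm A) = A" and id_cd: "cd (idm A) = A"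
    and cmp_dm: "cd f = dm g \<Longrightarrow> dm (cmp g f) = dm f"
    and cmp_cd: "cd f = dm g \<Longrightarrow> cd (cmp g f) = cd g"
    and id_left: "cmp (idm (cd f)) f = f"
    and id_right: "cmp f (idm (dm f)) = f"
    and cmp_assoc: "\<lbrakk>cd f = dm g; cd g = dm h\<rbrakk> \<Longrightarrow> cmp h (cmp g f) = cmp (cmp h g) f"

definition hom :: "('m \<Rightarrow> 'o) \<Rightarrow> ('m \<Rightarrow> 'o) \<Rightarrow> 'o \<Rightarrow> 'o \<Rightarrow> 'm set" where
  "hom dm cd A B = {f. dm f = A \<and> cd f = B}"

definition is_iso :: "('m \<Rightarrow> 'o) \<Rightarrow> ('m \<Rightarrow> 'o) \<Rightarrow> ('m \<Rightarrow> 'm \<Rightarrow> 'm) \<Rightarrow> ('o \<Rightarrow> 'm) \<Rightarrow> 'm \<Rightarrow> bool" where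
  "is_iso dm cd cmp idm f \<longleftrightarrow> (\<exists>g. g \<in> hom dm cd (cd f) (dm f) \<and>
      cmp g f = idm (dm f) \<and> cmp f g = idm (cd f))"

definition arr_inv :: "('m \<Rightarrow> 'o) \<Rightarrow> ('m \<Rightarrow> 'o) \<Rightarrow> ('m \<Rightarrow> 'm \<Rightarrow> 'm) \<Rightarrow> ('o \<Rightarrow> 'm) \<Rightarrow> 'm \<Rightarrow> 'm" where
  "arr_inv dm cd cmp idm f = (SOME g. g \<in> hom dm cd (cd f) (dm f) \<and>
      cmp g f = idm (dm f) \<and> cmp f g = idm (cd f))"

locale left_k_linear_category = category dm cd cmp idm
  for dm :: "'m \<Rightarrow> 'o" and cd :: "'m \<Rightarrow> 'o"
    and cmp :: "'m \<Rightarrow> 'm \<Rightarrow> 'm" and idm :: "'o \<Rightarrow> 'm" +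
  fixes add :: "'m \<Rightarrow> 'm \<Rightarrow> 'm"
    and smult :: "'k::comm_semiring_1 \<Rightarrow> 'm \<Rightarrow> 'm"
    and zro :: "'o \<Rightarrow> 'o \<Rightarrow> 'm"
  assumes add_hom: "\<lbrakk>f \<in> hom dm cd A B; g \<in> hom dm cd A B\<rbrakk> \<Longrightarrow> add f g \<in> hom dm cd A B"
    and smult_hom: "f \<in> hom dm cd A B \<Longrightarrow> smult r f \<in> hom dm cd A B"
    and zro_hom: "zro A B \<in> hom dm cd A B"
    and add_assoc: "\<lbrakk>f \<in> hom dm cd A B; g \<in> hom dm cd A B; h \<in> hom dm cd A B\<rbrakk>
        \<Longrightarrow> add (add f g) h = add f (add g h)"
    and add_comm: "\<lbrakk>f \<in> hom dm cd A B; g \<in> hom dm cd A B\<rbrakk> \<Longrightarrow> add f g = add g f"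
    and add_zro: "f \<in> hom dm cd A B \<Longrightarrow> add f (zro A B) = f"
    and smult_add_right: "\<lbrakk>f \<in> hom dm cd A B; g \<in> hom dm cd A B\<rbrakk>
        \<Longrightarrow> smult r (add f g) = add (smult r f) (smult r g)"
    and smult_add_left: "f \<in> hom dm cd A B \<Longrightarrow> smult (r + s) f = add (smult r f) (smult s f)"
    and smult_mult: "f \<in> hom dm cd A B \<Longrightarrow> smult (r * s) f = smult r (smult s f)"
    and smult_one: "f \<in> hom dm cd A B \<Longrightarrow> smult 1 f = f"
    and smult_zero_left: "f \<in> hom dm cd A B \<Longrightarrow> smult 0 f = zro A B"
    and smult_zero_right: "smult r (zro A B) = zro A B"
    and precomp_linear: "\<lbrakk>x \<in> hom dm cd A B; f \<in> hom dm cd B C; g \<in> hom dm cd B C\<rbrakk>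
        \<Longrightarrow> cmp (add (smult r f) (smult s g)) x = add (smult r (cmp f x)) (smult s (cmp g x))"
begin

definition k_linear :: "'m \<Rightarrow> bool" where
  "k_linear f \<longleftrightarrow> (\<forall>X x y r s. x \<in> hom dm cd X (dm f) \<longrightarrow> y \<in> hom dm cd X (dm f) \<longrightarrow>
     cmp f (add (smult r x) (smult s y)) = add (smult r (cmp f x)) (smult s (cmp f y)))"

end

locale cartesian_left_k_linear_category = left_k_linear_category dm cd cmp idm add smult zro
  for dm :: "'m \<Rightarrow> 'o" and cd :: "'m \<Rightarrow> 'o"
    and cmp :: "'m \<Rightarrow> 'm \<Rightarrow> 'm" and idm :: "'o \<Rightarrow> 'm"
    and add :: "'m \<Rightarrow> 'm \<Rightarrow> 'm"
    and smult :: "'k::comm_semiring_1 \<Rightarrow> 'm \<Rightarrow> 'm"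
    and zro :: "'o \<Rightarrow> 'o \<Rightarrow> 'm" +
  fixes prod :: "'o \<Rightarrow> 'o \<Rightarrow> 'o"
    and p1 :: "'o \<Rightarrow> 'o \<Rightarrow> 'm" and p2 :: "'o \<Rightarrow> 'o \<Rightarrow> 'm"
    and pair :: "'m \<Rightarrow> 'm \<Rightarrow> 'm"
    and T :: "'o" and bang :: "'o \<Rightarrow> 'm"
  assumes p1_hom: "p1 A B \<in> hom dm cd (prod A B) A"
    and p2_hom: "p2 A B \<in> hom dm cd (prod A B) B"
    and pair_hom: "\<lbrakk>f \<in> hom dm cd X A; g \<in> hom dm cd X B\<rbrakk> \<Longrightarrow> pair f g \<in> hom dm cd X (prod A B)"
    and p1_pair: "\<lbrakk>f \<in> hom dm cd X A; g \<in> hom dm cd X B\<rbrakk> \<Longrightarrow> cmp (p1 A B) (pair f g) = f"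
    and p2_pair: "\<lbrakk>f \<in> hom dm cd X A; g \<in> hom dm cd X B\<rbrakk> \<Longrightarrow> cmp (p2 A B) (pair f g) = g"
    and pair_unique: "h \<in> hom dm cd X (prod A B) \<Longrightarrow> pair (cmp (p1 A B) h) (cmp (p2 A B) h) = h"
    and bang_hom: "bang A \<in> hom dm cd A T"
    and bang_unique: "f \<in> hom dm cd A T \<Longrightarrow> f = bang A"
    and p1_linear: "k_linear (p1 A B)"
    and p2_linear: "k_linear (p2 A B)"

locale cartesian_k_differential_category =
  cartesian_left_k_linear_category dm cd cmp idm add smult zro prod p1 p2 pair T bang
  for dm :: "'m \<Rightarrow> 'o" and cd :: "'m \<Rightarrow> 'o"
    and cmp :: "'m \<Rightarrow> 'm \<Rightarrow> 'm" and idm :: "'o \<Rightarrow> 'm"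
    and add :: "'m \<Rightarrow> 'm \<Rightarrow> 'm"
    and smult :: "'k::comm_semiring_1 \<Rightarrow> 'm \<Rightarrow> 'm"
    and zro :: "'o \<Rightarrow> 'o \<Rightarrow> 'm"
    and prod :: "'o \<Rightarrow> 'o \<Rightarrow> 'o"
    and p1 :: "'o \<Rightarrow> 'o \<Rightarrow> 'm" and p2 :: "'o \<Rightarrow> 'o \<Rightarrow> 'm"
    and pair :: "'m \<Rightarrow> 'm \<Rightarrow> 'm"
    and T :: "'o" and bang :: "'o \<Rightarrow> 'm" +
  fixes D :: "'m \<Rightarrow> 'm"
  assumes D_hom: "f \<in> hom dm cd A B \<Longrightarrow> D f \<in> hom dm cd (prod A A) B"
    and CD1: "\<lbrakk>f \<in> hom dm cd A B; g \<in> hom dm cd A B\<rbrakk>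
        \<Longrightarrow> D (add (smult r f) (smult s g)) = add (smult r (D f)) (smult s (D g))"
    and CD2: "f \<in> hom dm cd A B \<Longrightarrow>
        (let P = prod A (prod A A);
             q1 = p1 A (prod A A);
             q2 = cmp (p1 A A) (p2 A (prod A A));
             q3 = cmp (p2 A A) (p2 A (prod A A))
         in cmp (D f) (pair q1 (add (smult r q2) (smult s q3)))
            = add (smult r (cmp (D f) (pair q1 q2))) (smult s (cmp (D f) (pair q1 q3))))"
    and CD3_id: "D (idm A) = p2 A A"
    and CD3_p1: "D (p1 A B) = cmp (p1 A B) (p2 (prod A B) (prod A B))"
    and CD3_p2: "D (p2 A B) = cmp (p2 A B) (p2 (prod A B) (prod A B))"
    and CD4: "\<lbrakk>f \<in> hom dm cd X A; g \<in> hom dm cd X B\<rbrakk> \<Longrightarrow> D (pair f g) = pair (D f) (D g)"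
    and CD4_bang: "D (bang A) = bang (prod A A)"
    and CD5: "\<lbrakk>f \<in> hom dm cd A B; g \<in> hom dm cd B C\<rbrakk>
        \<Longrightarrow> D (cmp g f) = cmp (D g) (pair (cmp f (p1 A A)) (D f))"
    and CD6: "f \<in> hom dm cd A B \<Longrightarrow>
        cmp (D (D f)) (pair (pair (p1 A A) (zro (prod A A) A)) (pair (zro (prod A A) A) (p2 A A)))
          = D f"
    and CD7: "f \<in> hom dm cd A B \<Longrightarrow>
        (let Q = prod (prod A A) (prod A A);
             q1 = cmp (p1 A A) (p1 (prod A A) (prod A A));
             q2 = cmp (p2 A A) (p1 (prod A A) (prod A A));
             q3 = cmp (p1 A A) (p2 (prod A A) (prod A A));
             q4 = cmp (p2 A A) (p2 (prod A A) (prod A A))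
         in cmp (D (D f)) (pair (pair q1 q2) (pair q3 q4))
            = cmp (D (D f)) (pair (pair q1 q3) (pair q2 q4)))"
begin

definition D_linear :: "'m \<Rightarrow> bool" where
  "D_linear f \<longleftrightarrow> D f = cmp f (p2 (dm f) (dm f))"

end

locale cartesian_closed_k_differential_category =
  cartesian_k_differential_category dm cd cmp idm add smult zro prod p1 p2 pair T bang D
  for dm :: "'m \<Rightarrow> 'o" and cd :: "'m \<Rightarrow> 'o"
    and cmp :: "'m \<Rightarrow> 'm \<Rightarrow> 'm" and idm :: "'o \<Rightarrow> 'm"
    and add :: "'m \<Rightarrow> 'm \<Rightarrow> 'm"
    and smult :: "'k::comm_semiring_1 \<Rightarrow> 'm \<Rightarrow> 'm"
    and zro :: "'o \<Rightarrow> 'o \<Rightarrow> 'm"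
    and prod :: "'o \<Rightarrow> 'o \<Rightarrow> 'o"
    and p1 :: "'o \<Rightarrow> 'o \<Rightarrow> 'm" and p2 :: "'o \<Rightarrow> 'o \<Rightarrow> 'm"
    and pair :: "'m \<Rightarrow> 'm \<Rightarrow> 'm"
    and T :: "'o" and bang :: "'o \<Rightarrow> 'm"
    and D :: "'m \<Rightarrow> 'm" +
  fixes exp :: "'o \<Rightarrow> 'o \<Rightarrow> 'o"
    and ev :: "'o \<Rightarrow> 'o \<Rightarrow> 'm"
    and lam :: "'o \<Rightarrow> 'o \<Rightarrow> 'm \<Rightarrow> 'm"
  assumes ev_hom: "ev C B \<in> hom dm cd (prod C (exp C B)) B"
    and lam_hom: "f \<in> hom dm cd (prod C A) B \<Longrightarrow> lam C A f \<in> hom dm cd A (exp C B)"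
    and ev_lam: "f \<in> hom dm cd (prod C A) B \<Longrightarrow>
        cmp (ev C B) (pair (p1 C A) (cmp (lam C A f) (p2 C A))) = f"
    and lam_unique: "g \<in> hom dm cd A (exp C B) \<Longrightarrow>
        lam C A (cmp (ev C B) (pair (p1 C A) (cmp g (p2 C A)))) = g"
    and lam_linear: "\<lbrakk>f \<in> hom dm cd (prod C A) B; g \<in> hom dm cd (prod C A) B\<rbrakk> \<Longrightarrow>
        lam C A (add (smult r f) (smult s g)) = add (smult r (lam C A f)) (smult s (lam C A g))"
    and D_lam: "f \<in> hom dm cd (prod C A) B \<Longrightarrow>
        D (lam C A f) = lam C (prod A A)
          (cmp (D f) (pair (pair (p1 C (prod A A)) (cmp (p1 A A) (p2 C (prod A A))))
                           (pair (zro (prod C (prod A A)) C) (cmp (p2 A A) (p2 C (prod A A))))))"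

locale cartesian_k_differential_monad =
  cartesian_k_differential_category dm cd cmp idm add smult zro prod p1 p2 pair T bang D
  for dm :: "'m \<Rightarrow> 'o" and cd :: "'m \<Rightarrow> 'o"
    and cmp :: "'m \<Rightarrow> 'm \<Rightarrow> 'm" and idm :: "'o \<Rightarrow> 'm"
    and add :: "'m \<Rightarrow> 'm \<Rightarrow> 'm"
    and smult :: "'k::comm_semiring_1 \<Rightarrow> 'm \<Rightarrow> 'm"
    and zro :: "'o \<Rightarrow> 'o \<Rightarrow> 'm"
    and prod :: "'o \<Rightarrow> 'o \<Rightarrow> 'o"
    and p1 :: "'o \<Rightarrow> 'o \<Rightarrow> 'm" and p2 :: "'o \<Rightarrow> 'o \<Rightarrow> 'm"
    and pair :: "'m \<Rightarrow> 'm \<Rightarrow> 'm"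
    and T :: "'o" and bang :: "'o \<Rightarrow> 'm"
    and D :: "'m \<Rightarrow> 'm" +
  fixes S :: "'o \<Rightarrow> 'o" and Sm :: "'m \<Rightarrow> 'm"
    and mu :: "'o \<Rightarrow> 'm" and eta :: "'o \<Rightarrow> 'm"
  assumes S_hom: "f \<in> hom dm cd A B \<Longrightarrow> Sm f \<in> hom dm cd (S A) (S B)"
    and S_id: "Sm (idm A) = idm (S A)"
    and S_cmp: "\<lbrakk>f \<in> hom dm cd A B; g \<in> hom dm cd B C\<rbrakk> \<Longrightarrow> Sm (cmp g f) = cmp (Sm g) (Sm f)"
    and S_terminal: "is_iso dm cd cmp idm (bang (S T))"
    and S_omega: "is_iso dm cd cmp idm (pair (Sm (p1 A B)) (Sm (p2 A B)))"
    and S_linear: "\<lbrakk>f \<in> hom dm cd A B; g \<in> hom dm cd A B\<rbrakk>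
        \<Longrightarrow> Sm (add (smult r f) (smult s g)) = add (smult r (Sm f)) (smult s (Sm g))"
    and S_D: "f \<in> hom dm cd A B \<Longrightarrow>
        D (Sm f) = cmp (Sm (D f)) (arr_inv dm cd cmp idm (pair (Sm (p1 A A)) (Sm (p2 A A))))"
    and mu_hom: "mu A \<in> hom dm cd (S (S A)) (S A)"
    and eta_hom: "eta A \<in> hom dm cd A (S A)"
    and mu_nat: "f \<in> hom dm cd A B \<Longrightarrow> cmp (mu B) (Sm (Sm f)) = cmp (Sm f) (mu A)"
    and eta_nat: "f \<in> hom dm cd A B \<Longrightarrow> cmp (eta B) f = cmp (Sm f) (eta A)"
    and mu_assoc: "cmp (mu A) (Sm (mu A)) = cmp (mu A) (mu (S A))"
    and mu_eta_left: "cmp (mu A) (eta (S A)) = idm (S A)"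
    and mu_eta_right: "cmp (mu A) (Sm (eta A)) = idm (S A)"
    and eta_D_linear: "D_linear (eta A)"
    and mu_D_linear: "D_linear (mu A)"

end

theory Submission
  imports Defs
begin

text \<open>Every component of the reader monad is a curried map, so by uniqueness of currying each
monad law and each differential law reduces to an equation between maps evaluated at an arbitrary
generalized point. The only differential input is that evaluation is linear in its function
argument: currying \<open>ev\<close> gives the identity, and the compatibility of \<open>D\<close> with currying together
with \<open>D[1] = \<pi>\<^sub>2\<close> identifies the partial derivative of \<open>ev\<close> in its second argument with \<open>ev\<close>
itself. This makes \<open>\<eta>\<close> and \<open>\<mu>\<close> \<open>D\<close>-linear and gives \<open>D[C,f] = [C,D[f]] \<circ> \<omega>\<^sup>-\<^sup>1\<close>, where
\<open>\<omega>\<^sup>-\<^sup>1\<close> pairs two curried maps pointwise.\<close>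

lemma mem_hom_iff: "f \<in> hom dm cd A B \<longleftrightarrow> dm f = A \<and> cd f = B"
  by (simp add: hom_def)

context category
begin

declare id_dm[simp] id_cd[simp] cmp_dm[simp] cmp_cd[simp]

lemma cmp_assoc_right[simp]:
  "cd f = dm g \<Longrightarrow> cd g = dm h \<Longrightarrow> cmp (cmp h g) f = cmp h (cmp g f)"
  by (simp add: cmp_assoc)

lemma cmp_idm_left[simp]: "cd f = A \<Longrightarrow> cmp (idm A) f = f"
  using id_left by blast

lemma cmp_idm_right[simp]: "dm f = A \<Longrightarrow> cmp f (idm A) = f"
  using id_right by blast

lemma arr_inv_eqI:
  assumes "dm g = cd f" "cd g = dm f" "cmp g f = idm (dm f)" "cmp f g = idm (cd f)"
  shows "arr_inv dm cd cmp idm f = g"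
proof -
  let ?g' = "arr_inv dm cd cmp idm f"
  have "g \<in> hom dm cd (cd f) (dm f) \<and> cmp g f = idm (dm f) \<and> cmp f g = idm (cd f)"
    using assms by (simp add: mem_hom_iff)
  then have "?g' \<in> hom dm cd (cd f) (dm f) \<and> cmp ?g' f = idm (dm f) \<and> cmp f ?g' = idm (cd f)"
    unfolding arr_inv_def by (rule someI)
  then have g': "dm ?g' = cd f" "cd ?g' = dm f" "cmp ?g' f = idm (dm f)"
    by (auto simp: mem_hom_iff)
  have "?g' = cmp ?g' (cmp f g)" using assms g' by simp
  also have "\<dots> = cmp (cmp ?g' f) g" using assms g' cmp_assoc[of g f ?g'] by simp
  also have "\<dots> = g" using assms g' by (simp del: cmp_assoc_right)
  finally show ?thesis .
qed

end

context left_k_linear_category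
begin

lemma zro_dm[simp]: "dm (zro A B) = A" and zro_cd[simp]: "cd (zro A B) = B"
  using zro_hom by (auto simp: mem_hom_iff)

lemma cmp_zro[simp]: "cd x = A \<Longrightarrow> cmp (zro A B) x = zro (dm x) B"
proof -
  assume x: "cd x = A"
  have "cmp (add (smult 0 (zro A B)) (smult 0 (zro A B))) x
        = add (smult 0 (cmp (zro A B) x)) (smult 0 (cmp (zro A B) x))"
    using x by (intro precomp_linear) (auto simp: mem_hom_iff)
  moreover have "smult 0 (cmp (zro A B) x) = zro (dm x) B"
    using x by (intro smult_zero_left) (auto simp: mem_hom_iff)
  moreover have "add (zro X Y) (zro X Y) = zro X Y" for X Y
    using add_zro zro_hom by blast
  ultimately show ?thesis by (simp add: smult_zero_right)
qed

end

context cartesian_left_k_linear_category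
begin

lemma p1_dm[simp]: "dm (p1 A B) = prod A B" and p1_cd[simp]: "cd (p1 A B) = A"
  and p2_dm[simp]: "dm (p2 A B) = prod A B" and p2_cd[simp]: "cd (p2 A B) = B"
  using p1_hom p2_hom by (auto simp: mem_hom_iff)

lemma bang_dm[simp]: "dm (bang A) = A" and bang_cd[simp]: "cd (bang A) = T"
  using bang_hom by (auto simp: mem_hom_iff)

lemma pair_dm[simp]: "dm g = dm f \<Longrightarrow> dm (pair f g) = dm f"
  and pair_cd[simp]: "dm g = dm f \<Longrightarrow> cd (pair f g) = prod (cd f) (cd g)"
  using pair_hom[of f "dm f" "cd f" g "cd g"] by (auto simp: mem_hom_iff)

lemma cmp_p1_pair[simp]:
  "cd f = A \<Longrightarrow> cd g = B \<Longrightarrow> dm g = dm f \<Longrightarrow> cmp (p1 A B) (pair f g) = f"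
  using p1_pair[of f "dm f" A g B] by (simp add: mem_hom_iff)

lemma cmp_p2_pair[simp]:
  "cd f = A \<Longrightarrow> cd g = B \<Longrightarrow> dm g = dm f \<Longrightarrow> cmp (p2 A B) (pair f g) = g"
  using p2_pair[of f "dm f" A g B] by (simp add: mem_hom_iff)

lemma pair_cmp_p1_p2[simp]: "cd h = prod A B \<Longrightarrow> pair (cmp (p1 A B) h) (cmp (p2 A B) h) = h"
  using pair_unique[of h "dm h" A B] by (simp add: mem_hom_iff)

lemma pair_p1_p2[simp]: "pair (p1 A B) (p2 A B) = idm (prod A B)"
  using pair_cmp_p1_p2[of "idm (prod A B)" A B] by simp

lemma pair_eqI:
  assumes "dm h = dm k" "cd h = prod A B" "cd k = prod A B"
    and "cmp (p1 A B) h = cmp (p1 A B) k" "cmp (p2 A B) h = cmp (p2 A B) k"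
  shows "h = k"
  using pair_cmp_p1_p2[of h A B] pair_cmp_p1_p2[of k A B] assms by metis

lemma cmp_pair[simp]:
  assumes "dm g = dm f" "cd h = dm f"
  shows "cmp (pair f g) h = pair (cmp f h) (cmp g h)"
  by (rule pair_eqI[where A = "cd f" and B = "cd g"])
    (use assms cmp_assoc_right[of h "pair f g" "p1 (cd f) (cd g)"]
         cmp_assoc_right[of h "pair f g" "p2 (cd f) (cd g)"] in simp_all)

end

context cartesian_k_differential_category
begin

declare CD3_id[simp] CD3_p1[simp] CD3_p2[simp] CD4_bang[simp]

lemma D_dm[simp]: "dm (D f) = prod (dm f) (dm f)" and D_cd[simp]: "cd (D f) = cd f"
  using D_hom[of f "dm f" "cd f"] by (auto simp: mem_hom_iff)

lemma D_cmp[simp]: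
  "cd f = dm g \<Longrightarrow> D (cmp g f) = cmp (D g) (pair (cmp f (p1 (dm f) (dm f))) (D f))"
  using CD5[of f "dm f" "cd f" g "cd g"] by (simp add: mem_hom_iff)

lemma D_pair[simp]: "dm g = dm f \<Longrightarrow> D (pair f g) = pair (D f) (D g)"
  using CD4[of f "dm f" "cd f" g "cd g"] by (simp add: mem_hom_iff)

end

context cartesian_closed_k_differential_category
begin

lemma ev_dm[simp]: "dm (ev C B) = prod C (exp C B)" and ev_cd[simp]: "cd (ev C B) = B"
  using ev_hom by (auto simp: mem_hom_iff)

lemma lam_dm[simp]: "dm f = prod C A \<Longrightarrow> dm (lam C A f) = A"
  and lam_cd[simp]: "dm f = prod C A \<Longrightarrow> cd (lam C A f) = exp C (cd f)"
  using lam_hom[of f C A "cd f"] by (auto simp: mem_hom_iff)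

lemma ev_pair_cmp_lam[simp]:
  assumes "dm \<phi> = prod C Y" "cd \<phi> = B" "cd c = C" "cd x = Y" "dm x = dm c"
  shows "cmp (ev C B) (pair c (cmp (lam C Y \<phi>) x)) = cmp \<phi> (pair c x)"
proof -
  have "cmp (ev C B) (pair c (cmp (lam C Y \<phi>) x))
      = cmp (cmp (ev C B) (pair (p1 C Y) (cmp (lam C Y \<phi>) (p2 C Y)))) (pair c x)"
    using assms by simp
  also have "\<dots> = cmp \<phi> (pair c x)"
    using ev_lam[of \<phi> C Y B] assms by (simp add: mem_hom_iff)
  finally show ?thesis .
qed

lemma lam_eqI:
  assumes "dm h = dm g" "cd g = exp C B" "cd h = exp C B"
    and "\<And>c x. cd c = C \<Longrightarrow> cd x = dm g \<Longrightarrow> dm x = dm c \<Longrightarrow>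
           cmp (ev C B) (pair c (cmp g x)) = cmp (ev C B) (pair c (cmp h x))"
  shows "g = h"
proof -
  have "g = lam C (dm g) (cmp (ev C B) (pair (p1 C (dm g)) (cmp g (p2 C (dm g)))))"
    using assms lam_unique[of g "dm g" C B] by (simp add: mem_hom_iff)
  also have "\<dots> = lam C (dm g) (cmp (ev C B) (pair (p1 C (dm g)) (cmp h (p2 C (dm g)))))"
    using assms(4)[of "p1 C (dm g)" "p2 C (dm g)"] by simp
  also have "\<dots> = h"
    using assms lam_unique[of h "dm g" C B] by (simp add: mem_hom_iff)
  finally show ?thesis .
qed

lemma D_lam_eq[simp]:
  "dm f = prod C A \<Longrightarrow>
   D (lam C A f) = lam C (prod A A)
     (cmp (D f) (pair (pair (p1 C (prod A A)) (cmp (p1 A A) (p2 C (prod A A))))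
                      (pair (zro (prod C (prod A A)) C) (cmp (p2 A A) (p2 C (prod A A))))))"
  using D_lam[of f C A "cd f"] by (simp add: mem_hom_iff)

lemma lam_ev[simp]: "lam C (exp C B) (ev C B) = idm (exp C B)"
  using lam_unique[of "idm (exp C B)" "exp C B" C B] by (simp add: mem_hom_iff)

text \<open>Since \<open>\<lambda>(ev) = 1\<close>, the rule for \<open>D[\<lambda>(-)]\<close> and \<open>D[1] = \<pi>\<^sub>2\<close> give
\<open>\<lambda>(\<partial>\<^sub>2 ev) = \<pi>\<^sub>2 = \<lambda>(ev \<circ> (1 \<times> \<pi>\<^sub>2))\<close>.\<close>

lemma D_ev_second:
  assumes "cd c = C" "cd g = exp C B" "cd h = exp C B" "dm g = dm c" "dm h = dm c"
  shows "cmp (D (ev C B)) (pair (pair c g) (pair (zro (dm c) C) h)) = cmp (ev C B) (pair c h)"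
proof -
  let ?E = "exp C B"
  let ?P = "prod C (prod ?E ?E)"
  let ?\<psi> = "cmp (D (ev C B)) (pair (pair (p1 C (prod ?E ?E)) (cmp (p1 ?E ?E) (p2 C (prod ?E ?E))))
                                   (pair (zro ?P C) (cmp (p2 ?E ?E) (p2 C (prod ?E ?E)))))"
  have "p2 ?E ?E = lam C (prod ?E ?E) ?\<psi>"
    using D_lam_eq[of "ev C B" C ?E] by simp
  then have "?\<psi> = cmp (ev C B) (pair (p1 C (prod ?E ?E)) (cmp (p2 ?E ?E) (p2 C (prod ?E ?E))))"
    using ev_lam[of ?\<psi> C "prod ?E ?E" B] by (simp add: mem_hom_iff)
  then have "cmp ?\<psi> (pair c (pair g h))
      = cmp (cmp (ev C B) (pair (p1 C (prod ?E ?E)) (cmp (p2 ?E ?E) (p2 C (prod ?E ?E)))))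
            (pair c (pair g h))"
    by simp
  then show ?thesis using assms by simp
qed

abbreviation reader_map :: "'o \<Rightarrow> 'm \<Rightarrow> 'm" where
  "reader_map C f \<equiv> lam C (exp C (dm f)) (cmp f (ev C (dm f)))"

abbreviation reader_mult :: "'o \<Rightarrow> 'o \<Rightarrow> 'm" where
  "reader_mult C A \<equiv> lam C (exp C (exp C A))
     (cmp (ev C A) (pair (p1 C (exp C (exp C A))) (ev C (exp C A))))"

abbreviation reader_unit :: "'o \<Rightarrow> 'o \<Rightarrow> 'm" where
  "reader_unit C A \<equiv> lam C A (p2 C A)"

abbreviation reader_omega :: "'o \<Rightarrow> 'o \<Rightarrow> 'o \<Rightarrow> 'm" where
  "reader_omega C A B \<equiv> pair (reader_map C (p1 A B)) (reader_map C (p2 A B))"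

definition exp_pair :: "'o \<Rightarrow> 'o \<Rightarrow> 'o \<Rightarrow> 'm" where
  "exp_pair C A B = lam C (prod (exp C A) (exp C B))
     (pair (cmp (ev C A) (pair (p1 C (prod (exp C A) (exp C B)))
                               (cmp (p1 (exp C A) (exp C B)) (p2 C (prod (exp C A) (exp C B))))))
           (cmp (ev C B) (pair (p1 C (prod (exp C A) (exp C B)))
                               (cmp (p2 (exp C A) (exp C B)) (p2 C (prod (exp C A) (exp C B)))))))"

lemma exp_pair_dm[simp]: "dm (exp_pair C A B) = prod (exp C A) (exp C B)"
  and exp_pair_cd[simp]: "cd (exp_pair C A B) = exp C (prod A B)"
  by (simp_all add: exp_pair_def)

lemma reader_omega_exp_pair:
  "cmp (reader_omega C A B) (exp_pair C A B) = idm (prod (exp C A) (exp C B))"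
proof (rule pair_eqI[where A = "exp C A" and B = "exp C B"])
  have "cmp (reader_map C (p1 A B)) (exp_pair C A B) = p1 (exp C A) (exp C B)"
    by (simp, rule lam_eqI[where C = C and B = A]) (auto simp: exp_pair_def)
  then show "cmp (p1 (exp C A) (exp C B)) (cmp (reader_omega C A B) (exp_pair C A B))
      = cmp (p1 (exp C A) (exp C B)) (idm (prod (exp C A) (exp C B)))"
    by simp
  have "cmp (reader_map C (p2 A B)) (exp_pair C A B) = p2 (exp C A) (exp C B)"
    by (simp, rule lam_eqI[where C = C and B = B]) (auto simp: exp_pair_def)
  then show "cmp (p2 (exp C A) (exp C B)) (cmp (reader_omega C A B) (exp_pair C A B))
      = cmp (p2 (exp C A) (exp C B)) (idm (prod (exp C A) (exp C B)))"
    by simp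
qed simp_all

lemma exp_pair_reader_omega: "cmp (exp_pair C A B) (reader_omega C A B) = idm (exp C (prod A B))"
  by (rule lam_eqI[where C = C and B = "prod A B"]) (auto simp: exp_pair_def)

lemma arr_inv_reader_omega: "arr_inv dm cd cmp idm (reader_omega C A B) = exp_pair C A B"
  using reader_omega_exp_pair[of C A B] exp_pair_reader_omega[of C A B]
  by (intro arr_inv_eqI) simp_all

lemma reader_map_hom: "f \<in> hom dm cd A B \<Longrightarrow> reader_map C f \<in> hom dm cd (exp C A) (exp C B)"
  by (simp add: mem_hom_iff)

lemma reader_map_idm: "reader_map C (idm A) = idm (exp C A)"
  by (rule lam_eqI[where C = C and B = A]) auto

lemma reader_map_cmp:
  "f \<in> hom dm cd A B \<Longrightarrow> g \<in> hom dm cd B B' \<Longrightarrow>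
   reader_map C (cmp g f) = cmp (reader_map C g) (reader_map C f)"
  by (rule lam_eqI[where C = C and B = B']) (auto simp: mem_hom_iff)

lemma exp_terminal_iso: "is_iso dm cd cmp idm (bang (exp C T))"
proof -
  let ?g = "lam C T (bang (prod C T))"
  have "cmp (bang (exp C T)) ?g = idm T"
    using bang_unique[of "cmp (bang (exp C T)) ?g" T] bang_unique[of "idm T" T]
    by (simp add: mem_hom_iff)
  moreover have "cmp ?g (bang (exp C T)) = idm (exp C T)"
  proof (rule lam_eqI[where C = C and B = T])
    fix c x assume "cd c = C" "cd x = dm (cmp ?g (bang (exp C T)))" "dm x = dm c"
    then have "cmp (ev C T) (pair c (cmp (cmp ?g (bang (exp C T))) x)) \<in> hom dm cd (dm c) T"
      and "cmp (ev C T) (pair c (cmp (idm (exp C T)) x)) \<in> hom dm cd (dm c) T"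
      by (simp_all add: mem_hom_iff)
    then show "cmp (ev C T) (pair c (cmp (cmp ?g (bang (exp C T))) x)) =
               cmp (ev C T) (pair c (cmp (idm (exp C T)) x))"
      using bang_unique by metis
  qed simp_all
  ultimately show ?thesis
    unfolding is_iso_def by (intro exI[of _ ?g]) (simp add: mem_hom_iff)
qed

lemma reader_omega_iso: "is_iso dm cd cmp idm (reader_omega C A B)"
  using reader_omega_exp_pair[of C A B] exp_pair_reader_omega[of C A B]
  unfolding is_iso_def by (intro exI[of _ "exp_pair C A B"]) (simp add: mem_hom_iff)

lemma reader_map_linear:
  assumes "f \<in> hom dm cd A B" "g \<in> hom dm cd A B"
  shows "reader_map C (add (smult r f) (smult s g))
       = add (smult r (reader_map C f)) (smult s (reader_map C g))"
proof -
  have "dm (add (smult r f) (smult s g)) = A"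
    using assms add_hom smult_hom by (simp add: mem_hom_iff)
  moreover have "cmp (add (smult r f) (smult s g)) (ev C A)
      = add (smult r (cmp f (ev C A))) (smult s (cmp g (ev C A)))"
    using assms by (intro precomp_linear) (simp_all add: mem_hom_iff)
  ultimately show ?thesis
    using assms by (simp add: mem_hom_iff lam_linear)
qed

lemma D_reader_map:
  "f \<in> hom dm cd A B \<Longrightarrow>
   D (reader_map C f) = cmp (reader_map C (D f)) (arr_inv dm cd cmp idm (reader_omega C A A))"
  unfolding arr_inv_reader_omega mem_hom_iff
  by (rule lam_eqI[where C = C and B = B]) (auto simp: exp_pair_def D_ev_second)

lemma reader_mult_hom: "reader_mult C A \<in> hom dm cd (exp C (exp C A)) (exp C A)"
  by (simp add: mem_hom_iff)

lemma reader_unit_hom: "reader_unit C A \<in> hom dm cd A (exp C A)"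
  by (simp add: mem_hom_iff)

lemma reader_mult_natural:
  "f \<in> hom dm cd A B \<Longrightarrow>
   cmp (reader_mult C B) (reader_map C (reader_map C f)) = cmp (reader_map C f) (reader_mult C A)"
  by (rule lam_eqI[where C = C and B = B]) (auto simp: mem_hom_iff)

lemma reader_unit_natural:
  "f \<in> hom dm cd A B \<Longrightarrow> cmp (reader_unit C B) f = cmp (reader_map C f) (reader_unit C A)"
  by (rule lam_eqI[where C = C and B = B]) (auto simp: mem_hom_iff)

lemma reader_mult_assoc:
  "cmp (reader_mult C A) (reader_map C (reader_mult C A))
   = cmp (reader_mult C A) (reader_mult C (exp C A))"
  by (rule lam_eqI[where C = C and B = A]) auto

lemma reader_mult_unit_left: "cmp (reader_mult C A) (reader_unit C (exp C A)) = idm (exp C A)"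
  by (rule lam_eqI[where C = C and B = A]) auto

lemma reader_mult_unit_right: "cmp (reader_mult C A) (reader_map C (reader_unit C A)) = idm (exp C A)"
  by (rule lam_eqI[where C = C and B = A]) auto

lemma reader_unit_D_linear: "D_linear (reader_unit C A)"
  unfolding D_linear_def by (rule lam_eqI[where C = C and B = A]) auto

lemma reader_mult_D_linear: "D_linear (reader_mult C A)"
  unfolding D_linear_def by (rule lam_eqI[where C = C and B = A]) (auto simp: D_ev_second)

end

theorem mainTheorem4:
  fixes smult :: "'k::comm_semiring_1 \<Rightarrow> 'm \<Rightarrow> 'm"
    and C :: "'o"
    and prd :: "'o \<Rightarrow> 'o \<Rightarrow> 'o"
    and ex :: "'o \<Rightarrow> 'o \<Rightarrow> 'o"
  assumes "cartesian_closed_k_differential_category dm cd cmp idm add smult zro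
             prd p1 p2 pair T bang D ex ev lam"
  shows "cartesian_k_differential_monad dm cd cmp idm add smult zro prd p1 p2 pair T bang D
           (\<lambda>A. ex C A)
           (\<lambda>f. lam C (ex C (dm f)) (cmp f (ev C (dm f))))
           (\<lambda>A. lam C (ex C (ex C A))
                  (cmp (ev C A) (pair (p1 C (ex C (ex C A))) (ev C (ex C A)))))
           (\<lambda>A. lam C A (p2 C A))"
proof -
  interpret cartesian_closed_k_differential_category dm cd cmp idm add smult zro
      prd p1 p2 pair T bang D ex ev lam
    by (fact assms)
  show ?thesis
    by unfold_locales
      (rule reader_map_hom reader_map_idm reader_map_cmp exp_terminal_iso reader_omega_iso
         reader_map_linear D_reader_map reader_mult_hom reader_unit_hom reader_mult_natural
         reader_unit_natural reader_mult_assoc reader_mult_unit_left reader_mult_unit_right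
         reader_unit_D_linear reader_mult_D_linear; assumption)+
qed

end
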